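(* Let $G$ be a graph with $n$ vertices. If $G$ admits a $B_k$-EPG representation, then it admits a $B_k$-EPG representation on a grid of size at most $4n(k+1)\times 4n(k+1)$; and if $G$ admits a Helly $B_k$-EPG representation, then it admits a Helly $B_k$-EPG representation on a grid of size at most $4n(k+1)\times 4n(k+1)$.
   Context: A grid is the set of integer points of the plane; a grid edge joins two grid points at distance $1$. A path in the grid is a sequence of distinct grid edges in which consecutive edges share exactly one grid point and non-consecutive edges share none; a bend is a pair of consecutive edges with different directions (horizontal/vertical). An EPG representation of $G$ is a family $(P_v)_{v\in V(G)}$ of grid paths such that distinct $u,v$ are adjacent iff $P_u,P_v$ share a grid edge; it is $B_k$-EPG if every path has at most $k$ bends, and Helly if every subfamily of pairwise edge-intersecting paths has a grid edge common to all its members. A grid of size $a\times b$ consists of $a$ columns and $b$ rows of grid points. *)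

theory Defs
  imports Main
begin

type_synonym gpoint = "int \<times> int"
type_synonym gedge = "gpoint set"

definition grid_edge :: "gedge \<Rightarrow> bool" where
  "grid_edge e \<longleftrightarrow> (\<exists>p q. e = {p, q} \<and> \<bar>fst p - fst q\<bar> + \<bar>snd p - snd q\<bar> = 1)"

definition grid_path :: "gedge list \<Rightarrow> bool" where
  "grid_path es \<longleftrightarrow> es \<noteq> [] \<and> (\<forall>e\<in>set es. grid_edge e) \<and> distinct es \<and>
     (\<forall>i. Suc i < length es \<longrightarrow> card (es ! i \<inter> es ! Suc i) = 1) \<and>
     (\<forall>i j. Suc i < j \<and> j < length es \<longrightarrow> es ! i \<inter> es ! j = {})"

definition horizontal :: "gedge \<Rightarrow> bool" where
  "horizontal e \<longleftrightarrow> (\<forall>p\<in>e. \<forall>q\<in>e. snd p = snd q)"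

definition bends :: "gedge list \<Rightarrow> nat" where
  "bends es = card {i. Suc i < length es \<and> horizontal (es ! i) \<noteq> horizontal (es ! Suc i)}"

definition simple_graph :: "'a set \<Rightarrow> ('a \<Rightarrow> 'a \<Rightarrow> bool) \<Rightarrow> bool" where
  "simple_graph V E \<longleftrightarrow> finite V \<and> (\<forall>u v. E u v \<longrightarrow> u \<in> V \<and> v \<in> V \<and> u \<noteq> v \<and> E v u)"

definition EPG_rep :: "'a set \<Rightarrow> ('a \<Rightarrow> 'a \<Rightarrow> bool) \<Rightarrow> ('a \<Rightarrow> gedge list) \<Rightarrow> bool" where
  "EPG_rep V E P \<longleftrightarrow> (\<forall>v\<in>V. grid_path (P v)) \<and>
     (\<forall>u\<in>V. \<forall>v\<in>V. u \<noteq> v \<longrightarrow> (E u v \<longleftrightarrow> set (P u) \<inter> set (P v) \<noteq> {}))"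

definition Bk_EPG_rep :: "nat \<Rightarrow> 'a set \<Rightarrow> ('a \<Rightarrow> 'a \<Rightarrow> bool) \<Rightarrow> ('a \<Rightarrow> gedge list) \<Rightarrow> bool" where
  "Bk_EPG_rep k V E P \<longleftrightarrow> EPG_rep V E P \<and> (\<forall>v\<in>V. bends (P v) \<le> k)"

definition helly_rep :: "'a set \<Rightarrow> ('a \<Rightarrow> gedge list) \<Rightarrow> bool" where
  "helly_rep V P \<longleftrightarrow> (\<forall>S\<subseteq>V. (\<forall>u\<in>S. \<forall>v\<in>S. set (P u) \<inter> set (P v) \<noteq> {})
      \<longrightarrow> (\<exists>e. \<forall>v\<in>S. e \<in> set (P v)))"

definition on_grid :: "'a set \<Rightarrow> ('a \<Rightarrow> gedge list) \<Rightarrow> nat \<Rightarrow> nat \<Rightarrow> bool" where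
  "on_grid V P a b \<longleftrightarrow> (\<exists>x0 y0. \<forall>v\<in>V. \<forall>e\<in>set (P v). \<forall>p\<in>e.
      x0 \<le> fst p \<and> fst p < x0 + int a \<and> y0 \<le> snd p \<and> snd p < y0 + int b)"

definition on_grid_at_most :: "'a set \<Rightarrow> ('a \<Rightarrow> gedge list) \<Rightarrow> nat \<Rightarrow> bool" where
  "on_grid_at_most V P N \<longleftrightarrow> (\<exists>a b. a \<le> N \<and> b \<le> N \<and> on_grid V P a b)"

end

theory Submission
  imports Defs
begin

text \<open>
  Paths are handled as sequences of grid points. Call column \<open>x\<close> free for a path if the
  path passes through each of its points in column \<open>x\<close> horizontally. A column that is not
  free contains an endpoint or a bend point of the path (follow the vertical segment through
  the offending point), so a path with at most \<open>k\<close> bends blocks at most \<open>k + 2\<close> columns,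
  and the \<open>n\<close> paths together at most \<open>n(k + 2)\<close>. As long as the paths span more columns
  than that, some column \<open>x\<close> is free for all of them, and merging columns \<open>x\<close> and \<open>x + 1\<close>
  shrinks the representation: every collapsed horizontal edge has a neighbouring horizontal
  edge in the same row that survives, so bends, pairwise edge intersections and the Helly
  property are preserved. Compressing the columns, then (after transposing) the rows, leaves a
  grid of \<open>n(k + 2) + 1 \<le> 4n(k + 1)\<close> columns and rows.
\<close>

section \<open>Grid walks\<close>

definition grid_adj :: "gpoint \<Rightarrow> gpoint \<Rightarrow> bool" where
  "grid_adj p q \<longleftrightarrow> \<bar>fst p - fst q\<bar> + \<bar>snd p - snd q\<bar> = 1"

fun edges_of :: "gpoint list \<Rightarrow> gedge list" where
  "edges_of (p # q # ps) = {p, q} # edges_of (q # ps)"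
| "edges_of _ = []"

definition grid_walk :: "gpoint list \<Rightarrow> bool" where
  "grid_walk ps \<longleftrightarrow> 2 \<le> length ps \<and> distinct ps \<and> successively grid_adj ps"

lemma grid_adj_sym: "grid_adj p q \<Longrightarrow> grid_adj q p"
  by (auto simp: grid_adj_def)

lemma grid_adj_neq: "grid_adj p q \<Longrightarrow> p \<noteq> q"
  by (auto simp: grid_adj_def)

lemma grid_edge_iff_grid_adj: "grid_edge e \<longleftrightarrow> (\<exists>p q. e = {p, q} \<and> grid_adj p q)"
  by (simp add: grid_edge_def grid_adj_def)

lemma length_edges_of [simp]: "length (edges_of ps) = length ps - 1"
  by (induction ps rule: edges_of.induct) auto

lemma nth_edges_of: "Suc i < length ps \<Longrightarrow> edges_of ps ! i = {ps ! i, ps ! Suc i}"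
proof (induction ps arbitrary: i rule: edges_of.induct)
  case (1 p q ps)
  then show ?case by (cases i) auto
qed auto

lemma set_edges_of: "set (edges_of ps) = {{ps ! i, ps ! Suc i} | i. Suc i < length ps}"
  unfolding set_conv_nth[of "edges_of ps"] setcompr_eq_image
  by (auto simp: nth_edges_of intro!: image_cong)

lemma edges_of_map: "edges_of (map f ps) = map (image f) (edges_of ps)"
  by (induction ps rule: edges_of.induct) auto

lemma edge_subset_walk: "e \<in> set (edges_of ps) \<Longrightarrow> e \<subseteq> set ps"
  by (induction ps rule: edges_of.induct) auto

lemma grid_walk_adj: "grid_walk ps \<Longrightarrow> Suc i < length ps \<Longrightarrow> grid_adj (ps ! i) (ps ! Suc i)"
  by (simp add: grid_walk_def successively_nth)

lemma grid_path_edges_of: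
  assumes "grid_walk ps"
  shows "grid_path (edges_of ps)"
proof -
  have dist: "distinct ps" and len: "2 \<le> length ps" and adj: "successively grid_adj ps"
    using assms by (auto simp: grid_walk_def)
  note nth_eq = nth_eq_iff_index_eq[OF dist]
  have "grid_edge e" if "e \<in> set (edges_of ps)" for e
    using that adj unfolding set_edges_of grid_edge_iff_grid_adj by (blast dest: successively_nth)
  moreover have "distinct (edges_of ps)"
    unfolding distinct_conv_nth
    by (auto simp: nth_edges_of doubleton_eq_iff nth_eq)
  moreover have "edges_of ps ! i \<inter> edges_of ps ! Suc i = {ps ! Suc i}" if "Suc i < length (edges_of ps)" for i
    using that by (auto simp: nth_edges_of nth_eq)
  moreover have "edges_of ps ! i \<inter> edges_of ps ! j = {}" if "Suc i < j" "j < length (edges_of ps)" for i j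
    using that by (auto simp: nth_edges_of nth_eq)
  moreover have "edges_of ps \<noteq> []"
    using len by (simp flip: length_greater_0_conv)
  ultimately show ?thesis
    by (auto simp: grid_path_def simp del: length_edges_of)
qed

lemma Union_set_edges_of: "Suc 0 < length ps \<Longrightarrow> \<Union> (set (edges_of ps)) = set ps"
proof (induction ps rule: edges_of.induct)
  case (1 p q ps)
  then show ?case by (cases ps) auto
qed auto

lemma grid_path_tl: "grid_path (e # es) \<Longrightarrow> es \<noteq> [] \<Longrightarrow> grid_path es"
  unfolding grid_path_def by (metis Suc_less_eq distinct.simps(2) length_Cons list.set_intros(2) nth_Cons_Suc)

lemma grid_path_Cons_meets:
  "grid_path (e # es) \<Longrightarrow> es \<noteq> [] \<Longrightarrow> card (e \<inter> hd es) = 1"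
  unfolding grid_path_def by (auto simp: hd_conv_nth)

lemma grid_path_Cons_disjoint:
  assumes "grid_path (e # es)" "e' \<in> set (tl es)"
  shows "e \<inter> e' = {}"
proof -
  obtain j where "j < length (tl es)" "e' = tl es ! j"
    using assms(2) by (auto simp: in_set_conv_nth)
  then have "Suc 0 < Suc (Suc j)" "Suc (Suc j) < length (e # es)" "e' = (e # es) ! Suc (Suc j)"
    by (auto simp: nth_tl)
  then show ?thesis
    using assms(1) unfolding grid_path_def by (metis nth_Cons_0)
qed

lemma grid_walk_starting_at:
  assumes "grid_path es" "z \<in> hd es" "z \<notin> \<Union> (set (tl es))"
  shows "\<exists>ps. grid_walk ps \<and> edges_of ps = es \<and> hd ps = z"
  using assms
proof (induction es arbitrary: z)
  case Nil
  then show ?case by (simp add: grid_path_def)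
next
  case (Cons e es)
  have "grid_edge e"
    using Cons.prems(1) by (simp add: grid_path_def)
  then obtain w where e: "e = {z, w}" and zw: "grid_adj z w"
    using Cons.prems(2) unfolding grid_edge_iff_grid_adj by (auto dest: grid_adj_sym)
  show ?case
  proof (cases es)
    case Nil
    then show ?thesis
      using e zw grid_adj_neq[OF zw] by (intro exI[of _ "[z, w]"]) (auto simp: grid_walk_def)
  next
    fix e1 es' assume es: "es = e1 # es'"
    then have "card (e \<inter> e1) = 1"
      using grid_path_Cons_meets[OF Cons.prems(1)] by simp
    then have "e \<inter> e1 \<noteq> {}"
      by force
    moreover have "z \<notin> e1"
      using Cons.prems(3) es by simp
    ultimately have "w \<in> hd es"
      using e es by auto
    moreover have "w \<notin> \<Union> (set (tl es))"
      using grid_path_Cons_disjoint[OF Cons.prems(1)] e by blast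
    ultimately obtain ps where ps: "grid_walk ps" "edges_of ps = es" "hd ps = w"
      using Cons.IH grid_path_tl[OF Cons.prems(1)] es by blast
    then obtain rest where rest: "ps = w # rest"
      by (cases ps) (auto simp: grid_walk_def)
    have "set ps = \<Union> (set es)"
      using Union_set_edges_of[of ps] ps(1,2) by (simp add: grid_walk_def)
    then have "z \<notin> set ps"
      using Cons.prems(3) \<open>z \<notin> e1\<close> es by simp
    then have "grid_walk (z # ps)"
      using ps(1) zw rest by (auto simp: grid_walk_def)
    moreover have "edges_of (z # ps) = e # es"
      using rest ps(2) e by simp
    ultimately show ?thesis
      by auto
  qed
qed

lemma grid_path_obtain_walk:
  assumes "grid_path es"
  obtains ps where "grid_walk ps" "edges_of ps = es"
proof -
  obtain e es' where es: "es = e # es'"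
    using assms by (cases es) (auto simp: grid_path_def)
  have "grid_edge e"
    using assms es by (simp add: grid_path_def)
  then obtain p q where e: "e = {p, q}" "p \<noteq> q"
    unfolding grid_edge_iff_grid_adj by (metis grid_adj_neq)
  obtain z where z: "z \<in> e" "z \<notin> \<Union> (set es')"
  proof (cases es')
    case Nil
    then show ?thesis using that[of p] e by simp
  next
    case (Cons e1 es'')
    then have meets: "card (e \<inter> e1) = 1"
      using grid_path_Cons_meets[of e es'] assms es by simp
    have "\<not> e \<subseteq> e1"
    proof
      assume "e \<subseteq> e1"
      then have "card (e \<inter> e1) = card e"
        by (simp add: Int_absorb2)
      then show False
        using meets e by simp
    qed
    then obtain z where "z \<in> e" "z \<notin> e1"
      by blast
    moreover have "e \<inter> x = {}" if "x \<in> set es''" for x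
      using grid_path_Cons_disjoint[of e es' x] assms es Cons that by simp
    then have "z \<notin> \<Union> (set es'')"
      using \<open>z \<in> e\<close> by blast
    ultimately show ?thesis
      using that Cons by simp
  qed
  then have "z \<in> hd es" "z \<notin> \<Union> (set (tl es))"
    using es by simp_all
  then show ?thesis
    using grid_walk_starting_at[OF assms] that by blast
qed

section \<open>Collapsing adjacent duplicates\<close>

lemma card_adjacent_changes:
  "card {i. Suc i < length xs \<and> xs ! i \<noteq> xs ! Suc i} = length (remdups_adj xs) - 1"
proof (induction xs rule: remdups_adj.induct)
  case (3 x y xs)
  define S where "S = {i. Suc i < length (y # xs) \<and> (y # xs) ! i \<noteq> (y # xs) ! Suc i}"
  have "finite S"
    unfolding S_def by (rule finite_subset[of _ "{..<length (y # xs)}"]) auto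
  moreover have "{i. Suc i < length (x # y # xs) \<and> (x # y # xs) ! i \<noteq> (x # y # xs) ! Suc i}
      = (if x = y then {} else {0}) \<union> Suc ` S"
  proof (intro set_eqI iffI)
    fix i
    assume "i \<in> {i. Suc i < length (x # y # xs) \<and> (x # y # xs) ! i \<noteq> (x # y # xs) ! Suc i}"
    then show "i \<in> (if x = y then {} else {0}) \<union> Suc ` S"
      unfolding S_def by (cases i) auto
  qed (auto simp: S_def split: if_splits)
  moreover have "card S = length (remdups_adj (y # xs)) - 1"
    using 3 unfolding S_def by (cases "x = y") simp_all
  ultimately show ?case
    using remdups_adj_length_ge1[of "y # xs"] by (auto simp: card_image)
qed simp_all

lemma bends_conv_remdups_adj: "bends es = length (remdups_adj (map horizontal es)) - 1"
proof -
  have "{i. Suc i < length es \<and> horizontal (es ! i) \<noteq> horizontal (es ! Suc i)}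
      = {i. Suc i < length (map horizontal es) \<and> map horizontal es ! i \<noteq> map horizontal es ! Suc i}"
    by auto
  then show ?thesis
    unfolding bends_def by (simp only: card_adjacent_changes)
qed

lemma remdups_adj_Cons_cong:
  "remdups_adj xs = remdups_adj ys \<Longrightarrow> remdups_adj (x # xs) = remdups_adj (x # ys)"
  by (simp add: remdups_adj_Cons)

text \<open>Here \<open>b\<close> plays the role of the value just before \<open>xs\<close>.\<close>

lemma remdups_adj_Cons_map_filter:
  assumes "\<And>ys x zs. xs = ys @ x # zs \<Longrightarrow> \<not> P x \<Longrightarrow>
    last (b # map h ys) = h x \<or> (\<exists>z zs'. zs = z # zs' \<and> P z \<and> h z = h x)"
  shows "remdups_adj (b # map h (filter P xs)) = remdups_adj (b # map h xs)"
  using assms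
proof (induction xs arbitrary: b)
  case (Cons x xs)
  show ?case
  proof (cases "P x")
    case True
    have tail: "remdups_adj (h x # map h (filter P xs)) = remdups_adj (h x # map h xs)"
    proof (rule Cons.IH)
      fix ys y zs
      assume "xs = ys @ y # zs" "\<not> P y"
      then show "last (h x # map h ys) = h y \<or> (\<exists>z zs'. zs = z # zs' \<and> P z \<and> h z = h y)"
        using Cons.prems[of "x # ys" y zs] by simp
    qed
    show ?thesis
      using remdups_adj_Cons_cong[OF tail, of b] True by simp
  next
    case False
    then have "b = h x \<or> (\<exists>z zs'. xs = z # zs' \<and> P z \<and> h z = h x)"
      using Cons.prems[of "[]" x xs] by simp
    then consider "b = h x" | z zs' where "xs = z # zs'" "P z" "h z = h x"
      by blast
    then show ?thesis
    proof cases
      case 1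
      have "remdups_adj (b # map h (filter P xs)) = remdups_adj (b # map h xs)"
      proof (rule Cons.IH)
        fix ys y zs
        assume "xs = ys @ y # zs" "\<not> P y"
        then show "last (b # map h ys) = h y \<or> (\<exists>z zs'. zs = z # zs' \<and> P z \<and> h z = h y)"
          using Cons.prems[of "x # ys" y zs] 1 by (cases "ys = []") simp_all
      qed
      then show ?thesis
        using False 1 by simp
    next
      case 2
      have "remdups_adj (b # map h (filter P xs)) = remdups_adj (b # map h xs)"
      proof (rule Cons.IH)
        fix ys y zs
        assume "xs = ys @ y # zs" "\<not> P y"
        moreover have "ys \<noteq> []"
          using 2 calculation by auto
        ultimately show "last (b # map h ys) = h y \<or> (\<exists>z zs'. zs = z # zs' \<and> P z \<and> h z = h y)"
          using Cons.prems[of "x # ys" y zs] by simp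
      qed
      moreover have "remdups_adj (b # h x # map h xs) = remdups_adj (b # map h xs)"
        by (rule remdups_adj_Cons_cong) (use 2 in simp)
      ultimately show ?thesis
        using False by simp
    qed
  qed
qed simp

lemma remdups_adj_map_filter:
  assumes "\<And>ys x zs. xs = ys @ x # zs \<Longrightarrow> \<not> P x \<Longrightarrow>
    (ys \<noteq> [] \<and> h (last ys) = h x) \<or> (\<exists>z zs'. zs = z # zs' \<and> P z \<and> h z = h x)"
  shows "remdups_adj (map h (filter P xs)) = remdups_adj (map h xs)"
proof (cases xs)
  case (Cons x xs')
  have "remdups_adj (h x # map h (filter P xs)) = remdups_adj (h x # map h xs)"
  proof (rule remdups_adj_Cons_map_filter)
    fix ys y zs
    assume "xs = ys @ y # zs" "\<not> P y"
    then show "last (h x # map h ys) = h y \<or> (\<exists>z zs'. zs = z # zs' \<and> P z \<and> h z = h y)"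
      using assms[of ys y zs] Cons by (cases ys) (auto simp: last_map)
  qed
  moreover obtain y ys where "filter P xs = y # ys" "h y = h x"
    using assms[of "[]" x xs'] Cons by (cases "P x") force+
  ultimately show ?thesis
    using Cons by simp
qed simp

lemma edges_of_remdups_adj_map:
  "edges_of (remdups_adj (map f ps)) = map (image f) (filter (\<lambda>e. card (f ` e) = 2) (edges_of ps))"
proof (induction ps rule: edges_of.induct)
  case (1 p q ps)
  show ?case
  proof (cases "f p = f q")
    case True
    then show ?thesis using 1 by simp
  next
    case False
    obtain rest where "remdups_adj (f q # map f ps) = f q # rest"
      by (metis remdups_adj_Cons_alt)
    then show ?thesis using 1 False by simp
  qed
qed auto

lemma successively_remdups_adj_map:
  assumes "successively R ps" and "\<And>a b. R a b \<Longrightarrow> f a = f b \<or> R (f a) (f b)"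
  shows "successively R (remdups_adj (map f ps))"
proof -
  have "successively (\<lambda>a b. a = b \<or> R a b) (remdups_adj (map f ps))"
    using assms by (intro successively_remdups_adjI) (auto simp: successively_map elim!: successively_mono)
  then show ?thesis
    unfolding successively_conv_nth using remdups_adj_adjacent by blast
qed

lemma distinct_remdups_adj_map:
  assumes "distinct ps"
    and "\<And>p q. p \<in> set ps \<Longrightarrow> q \<in> set ps \<Longrightarrow> f p = f q \<Longrightarrow> p = q \<or> {p, q} \<in> set (edges_of ps)"
  shows "distinct (remdups_adj (map f ps))"
  using assms
proof (induction ps rule: edges_of.induct)
  case (1 a b rest)
  have "a \<notin> set (b # rest)"
    using "1.prems"(1) by simp
  have "distinct (remdups_adj (map f (b # rest)))"
  proof (rule "1.IH")
    fix p q
    assume pq: "p \<in> set (b # rest)" "q \<in> set (b # rest)" "f p = f q"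
    then have "{p, q} \<noteq> {a, b}"
      using \<open>a \<notin> set (b # rest)\<close> by (auto simp: doubleton_eq_iff)
    then show "p = q \<or> {p, q} \<in> set (edges_of (b # rest))"
      using "1.prems"(2)[of p q] pq by auto
  qed (use "1.prems"(1) in simp)
  moreover have "f a \<notin> f ` set (b # rest)" if "f a \<noteq> f b"
  proof
    assume "f a \<in> f ` set (b # rest)"
    then obtain q where q: "q \<in> set (b # rest)" "f a = f q"
      by blast
    then have "{a, q} \<in> set (edges_of (a # b # rest))"
      using "1.prems"(2)[of a q] \<open>a \<notin> set (b # rest)\<close> by auto
    then have "{a, q} = {a, b}"
      using \<open>a \<notin> set (b # rest)\<close> edge_subset_walk[of "{a, q}" "b # rest"] by auto
    then show False
      using that q \<open>a \<notin> set (b # rest)\<close> by (auto simp: doubleton_eq_iff)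
  qed
  ultimately show ?case
    by (cases "f a = f b") auto
qed auto

lemma horizontal_doubleton: "horizontal {p, q} \<longleftrightarrow> snd p = snd q"
  by (auto simp: horizontal_def)

lemma bends_map:
  assumes "\<And>e e'. e \<in> set es \<Longrightarrow> e' \<in> set es \<Longrightarrow>
    horizontal (g e) = horizontal (g e') \<longleftrightarrow> horizontal e = horizontal e'"
  shows "bends (map g es) = bends es"
proof -
  have "{i. Suc i < length es \<and> horizontal (map g es ! i) \<noteq> horizontal (map g es ! Suc i)}
      = {i. Suc i < length es \<and> horizontal (es ! i) \<noteq> horizontal (es ! Suc i)}"
  proof (intro Collect_cong conj_cong refl)
    fix i
    assume "Suc i < length es"
    then show "horizontal (map g es ! i) \<noteq> horizontal (map g es ! Suc i) \<longleftrightarrow>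
        horizontal (es ! i) \<noteq> horizontal (es ! Suc i)"
      using assms[of "es ! i" "es ! Suc i"] by simp
  qed
  then show ?thesis
    by (simp add: bends_def)
qed

section \<open>Free columns\<close>

definition horizontal_pass :: "gpoint list \<Rightarrow> nat \<Rightarrow> bool" where
  "horizontal_pass ps i \<longleftrightarrow> 0 < i \<and> Suc i < length ps \<and>
     snd (ps ! (i - 1)) = snd (ps ! i) \<and> snd (ps ! Suc i) = snd (ps ! i)"

definition blocked_columns :: "gpoint list \<Rightarrow> int set" where
  "blocked_columns ps = {fst (ps ! i) | i. i < length ps \<and> \<not> horizontal_pass ps i}"

lemma finite_blocked_columns: "finite (blocked_columns ps)"
  unfolding blocked_columns_def by simp

lemma free_column_horizontal_pass:
  "x \<notin> blocked_columns ps \<Longrightarrow> i < length ps \<Longrightarrow> fst (ps ! i) = x \<Longrightarrow> horizontal_pass ps i"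
  unfolding blocked_columns_def by blast

lemma horizontal_pass_neighbours:
  assumes "grid_walk ps" "horizontal_pass ps i"
  shows "{ps ! (i - 1), ps ! Suc i} =
    {(fst (ps ! i) - 1, snd (ps ! i)), (fst (ps ! i) + 1, snd (ps ! i))}"
proof -
  have i: "0 < i" "Suc i < length ps"
    using assms(2) by (auto simp: horizontal_pass_def)
  have "grid_adj (ps ! (i - 1)) (ps ! i)" "grid_adj (ps ! i) (ps ! Suc i)"
    using grid_walk_adj[OF assms(1), of "i - 1"] grid_walk_adj[OF assms(1), of i] i by simp_all
  moreover have "ps ! (i - 1) \<noteq> ps ! Suc i"
    using assms(1) i by (simp add: grid_walk_def nth_eq_iff_index_eq)
  ultimately show ?thesis
    using assms(2) unfolding horizontal_pass_def grid_adj_def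
    by (cases "ps ! (i - 1)"; cases "ps ! i"; cases "ps ! Suc i") (auto simp: abs_if split: if_splits)
qed

lemma free_column_point_edges:
  assumes "grid_walk ps" "x \<notin> blocked_columns ps" "(x, y) \<in> set ps"
  shows "{(x - 1, y), (x, y)} \<in> set (edges_of ps)" "{(x, y), (x + 1, y)} \<in> set (edges_of ps)"
proof -
  obtain i where i: "i < length ps" "ps ! i = (x, y)"
    using assms(3) by (auto simp: in_set_conv_nth)
  then have pass: "horizontal_pass ps i"
    using free_column_horizontal_pass[OF assms(2)] by simp
  then have "{ps ! (i - 1), ps ! i} \<in> set (edges_of ps)" "{ps ! i, ps ! Suc i} \<in> set (edges_of ps)"
    unfolding set_edges_of horizontal_pass_def by (force intro: exI[of _ "i - 1"])+
  moreover have "{ps ! (i - 1), ps ! Suc i} = {(x - 1, y), (x + 1, y)}"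
    using horizontal_pass_neighbours[OF assms(1) pass] i(2) by simp
  ultimately show "{(x - 1, y), (x, y)} \<in> set (edges_of ps)" "{(x, y), (x + 1, y)} \<in> set (edges_of ps)"
    using i(2) by (auto simp: doubleton_eq_iff insert_commute)
qed

definition bend_indices :: "gedge list \<Rightarrow> nat set" where
  "bend_indices es = {i. Suc i < length es \<and> horizontal (es ! i) \<noteq> horizontal (es ! Suc i)}"

lemma bends_eq_card_bend_indices: "bends es = card (bend_indices es)"
  unfolding bends_def bend_indices_def ..

lemma finite_bend_indices: "finite (bend_indices es)"
  unfolding bend_indices_def by (rule finite_subset[of _ "{..<length es}"]) auto

definition turn_indices :: "gpoint list \<Rightarrow> nat set" where
  "turn_indices ps = {0, length ps - 1} \<union> Suc ` bend_indices (edges_of ps)"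

lemma finite_turn_indices: "finite (turn_indices ps)"
  unfolding turn_indices_def using finite_bend_indices by simp

lemma card_turn_indices: "card (turn_indices ps) \<le> bends (edges_of ps) + 2"
proof -
  have "card (turn_indices ps) \<le> card {0, length ps - 1} + card (Suc ` bend_indices (edges_of ps))"
    unfolding turn_indices_def by (rule card_Un_le)
  moreover have "card {0, length ps - 1} \<le> 2"
    by (simp add: card_insert_if)
  moreover have "card (Suc ` bend_indices (edges_of ps)) \<le> bends (edges_of ps)"
    unfolding bends_eq_card_bend_indices by (rule card_image_le[OF finite_bend_indices])
  ultimately show ?thesis
    by linarith
qed

text \<open>A blocked point that is neither an endpoint nor a bend point lies on a vertical segment;
  walking along it reaches a bend point or the last point without leaving the column.\<close>

lemma blocked_point_turn_index:
  assumes walk: "grid_walk ps" and i: "i < length ps" "\<not> horizontal_pass ps i"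
  shows "\<exists>j\<in>turn_indices ps. fst (ps ! j) = fst (ps ! i)"
  using i
proof (induction "length ps - i" arbitrary: i rule: less_induct)
  case less
  show ?case
  proof (cases "i = 0 \<or> i = length ps - 1")
    case True
    then show ?thesis
      unfolding turn_indices_def by auto
  next
    case False
    then have i: "0 < i" "Suc i < length ps"
      using less.prems by auto
    show ?thesis
    proof (cases "horizontal (edges_of ps ! (i - 1)) = horizontal (edges_of ps ! i)")
      case False
      then have "i - 1 \<in> bend_indices (edges_of ps)"
        using i by (simp add: bend_indices_def)
      then have "Suc (i - 1) \<in> turn_indices ps"
        unfolding turn_indices_def by blast
      then show ?thesis
        using i(1) by auto
    next
      case True
      moreover have "edges_of ps ! (i - 1) = {ps ! (i - 1), ps ! i}"
        using nth_edges_of[of "i - 1" ps] i by simp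
      ultimately have "snd (ps ! (i - 1)) = snd (ps ! i) \<longleftrightarrow> snd (ps ! i) = snd (ps ! Suc i)"
        using nth_edges_of[OF i(2)] by (simp add: horizontal_doubleton)
      then have vertical: "snd (ps ! i) \<noteq> snd (ps ! Suc i)"
        using less.prems(2) i by (auto simp: horizontal_pass_def)
      then have "fst (ps ! Suc i) = fst (ps ! i)"
        using grid_walk_adj[OF walk i(2)] by (auto simp: grid_adj_def)
      moreover have "\<not> horizontal_pass ps (Suc i)"
        using vertical by (auto simp: horizontal_pass_def)
      moreover have "length ps - Suc i < length ps - i"
        using i by simp
      ultimately show ?thesis
        using less.hyps[of "Suc i"] i(2) by metis
    qed
  qed
qed

lemma card_blocked_columns:
  assumes "grid_walk ps"
  shows "card (blocked_columns ps) \<le> bends (edges_of ps) + 2"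
proof -
  have "blocked_columns ps \<subseteq> (\<lambda>j. fst (ps ! j)) ` turn_indices ps"
  proof
    fix c
    assume "c \<in> blocked_columns ps"
    then obtain i where "i < length ps" "\<not> horizontal_pass ps i" "c = fst (ps ! i)"
      unfolding blocked_columns_def by blast
    then obtain j where "j \<in> turn_indices ps" "fst (ps ! j) = c"
      using blocked_point_turn_index[OF assms] by metis
    then show "c \<in> (\<lambda>j. fst (ps ! j)) ` turn_indices ps"
      by (metis image_eqI)
  qed
  then have "card (blocked_columns ps) \<le> card ((\<lambda>j. fst (ps ! j)) ` turn_indices ps)"
    by (intro card_mono finite_imageI finite_turn_indices)
  also have "\<dots> \<le> card (turn_indices ps)"
    by (rule card_image_le[OF finite_turn_indices])
  finally show ?thesis
    using card_turn_indices le_trans by blast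
qed

section \<open>Merging two adjacent columns\<close>

definition merge_column :: "int \<Rightarrow> gpoint \<Rightarrow> gpoint" where
  "merge_column x p = (if fst p \<le> x then fst p else fst p - 1, snd p)"

definition link_edges :: "int \<Rightarrow> gedge set" where
  "link_edges x = {{(x, y), (x + 1, y)} | y. True}"

definition merge_safe :: "int \<Rightarrow> gpoint \<Rightarrow> gpoint \<Rightarrow> bool" where
  "merge_safe x a b \<longleftrightarrow> grid_adj a b \<and> {a, b} \<notin> link_edges x \<and>
     (fst a = x \<or> fst b = x \<longrightarrow> snd a = snd b)"

lemma merge_safe_sym: "merge_safe x a b \<Longrightarrow> merge_safe x b a"
  by (auto simp: merge_safe_def grid_adj_sym insert_commute)

lemma merge_column_eq_iff:
  "merge_column x p = merge_column x q \<longleftrightarrow> p = q \<or> (\<exists>y. {p, q} = {(x, y), (x + 1, y)})"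
  by (cases p; cases q) (auto simp: merge_column_def doubleton_eq_iff)

lemma merge_safe_link_endpoints:
  assumes "merge_safe x (x, y) b" "merge_safe x (x + 1, y) b'"
  shows "merge_column x b \<noteq> merge_column x b'"
  using assms
  by (cases b; cases b') (auto simp: merge_safe_def merge_column_def link_edges_def grid_adj_def split: if_splits)

lemma free_column_edge_merge_safe:
  assumes "grid_walk ps" "x \<notin> blocked_columns ps" "e \<in> set (edges_of ps)" "e \<notin> link_edges x"
  obtains a b where "e = {a, b}" "merge_safe x a b"
proof -
  obtain i where i: "Suc i < length ps" "e = {ps ! i, ps ! Suc i}"
    using assms(3) unfolding set_edges_of by blast
  have "fst (ps ! i) = x \<or> fst (ps ! Suc i) = x \<longrightarrow> snd (ps ! i) = snd (ps ! Suc i)"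
    using free_column_horizontal_pass[OF assms(2), of i] free_column_horizontal_pass[OF assms(2), of "Suc i"] i(1)
    by (auto simp: horizontal_pass_def)
  then show ?thesis
    using that i assms(4) grid_walk_adj[OF assms(1) i(1)] by (simp add: merge_safe_def)
qed

lemma merge_column_adj:
  "grid_adj a b \<Longrightarrow> merge_column x a = merge_column x b \<or> grid_adj (merge_column x a) (merge_column x b)"
  by (cases a; cases b) (auto simp: merge_column_def grid_adj_def)

lemma card_merge_column_edge:
  "grid_adj p q \<Longrightarrow> card (merge_column x ` {p, q}) = 2 \<longleftrightarrow> {p, q} \<notin> link_edges x"
  using grid_adj_neq[of p q] by (auto simp: merge_column_eq_iff link_edges_def card_insert_if)

lemma merge_column_inj_on_safe_edges:
  assumes "merge_safe x a b" "merge_safe x a' b'"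
    and "merge_column x ` {a, b} = merge_column x ` {a', b'}"
  shows "{a, b} = {a', b'}"
proof -
  have same_first: "p = p'"
    if safe: "merge_safe x p q" "merge_safe x p' q'"
      and eq: "merge_column x p = merge_column x p'" "merge_column x q = merge_column x q'" for p q p' q'
  proof (rule ccontr)
    assume "p \<noteq> p'"
    then obtain y where "{p, p'} = {(x, y), (x + 1, y)}"
      using eq(1) merge_column_eq_iff by blast
    then consider "p = (x, y)" "p' = (x + 1, y)" | "p = (x + 1, y)" "p' = (x, y)"
      by (auto simp: doubleton_eq_iff)
    then show False
      using merge_safe_link_endpoints safe eq(2) by cases metis+
  qed
  from assms(3) consider
      "merge_column x a = merge_column x a'" "merge_column x b = merge_column x b'"
    | "merge_column x a = merge_column x b'" "merge_column x b = merge_column x a'"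
    by (auto simp: doubleton_eq_iff)
  then show ?thesis
  proof cases
    case 1
    then show ?thesis
      using same_first[OF assms(1,2)] same_first[OF merge_safe_sym[OF assms(1)] merge_safe_sym[OF assms(2)]]
      by simp
  next
    case 2
    then show ?thesis
      using same_first[OF assms(1) merge_safe_sym[OF assms(2)]] same_first[OF merge_safe_sym[OF assms(1)] assms(2)]
      by auto
  qed
qed

definition merge_walk :: "int \<Rightarrow> gpoint list \<Rightarrow> gpoint list" where
  "merge_walk x ps = remdups_adj (map (merge_column x) ps)"

lemma set_merge_walk: "set (merge_walk x ps) = merge_column x ` set ps"
  by (simp add: merge_walk_def)

lemma edges_of_merge_walk:
  assumes "successively grid_adj ps"
  shows "edges_of (merge_walk x ps) =
    map (image (merge_column x)) (filter (\<lambda>e. e \<notin> link_edges x) (edges_of ps))"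
proof -
  have "card (merge_column x ` e) = 2 \<longleftrightarrow> e \<notin> link_edges x" if e: "e \<in> set (edges_of ps)" for e
  proof -
    obtain i where "Suc i < length ps" "e = {ps ! i, ps ! Suc i}"
      using e unfolding set_edges_of by blast
    then show ?thesis
      using card_merge_column_edge[OF successively_nth[OF assms]] by simp
  qed
  then show ?thesis
    unfolding merge_walk_def edges_of_remdups_adj_map by (metis (mono_tags, lifting) filter_cong)
qed

lemma link_edge_partner:
  assumes "grid_walk ps" "x \<notin> blocked_columns ps" "e \<in> set (edges_of ps)" "e \<in> link_edges x"
  obtains y where "e = {(x, y), (x + 1, y)}" "{(x - 1, y), (x, y)} \<in> set (edges_of ps)"
proof -
  obtain y where e: "e = {(x, y), (x + 1, y)}"
    using assms(4) by (auto simp: link_edges_def)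
  then have "(x, y) \<in> set ps"
    using edge_subset_walk[OF assms(3)] by auto
  then show ?thesis
    using that e free_column_point_edges[OF assms(1,2)] by blast
qed

lemma left_link_not_link: "{(x - 1, y), (x, y)} \<notin> link_edges x"
  by (auto simp: link_edges_def doubleton_eq_iff)

lemma grid_walk_merge_walk:
  assumes "grid_walk ps" "x \<notin> blocked_columns ps"
  shows "grid_walk (merge_walk x ps)"
proof -
  have adj: "successively grid_adj ps"
    using assms(1) by (simp add: grid_walk_def)
  have "successively grid_adj (merge_walk x ps)"
    unfolding merge_walk_def using adj merge_column_adj by (rule successively_remdups_adj_map)
  moreover have "distinct (merge_walk x ps)"
    unfolding merge_walk_def
  proof (rule distinct_remdups_adj_map)
    show "distinct ps"
      using assms(1) by (simp add: grid_walk_def)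
  next
    fix p q
    assume "p \<in> set ps" "q \<in> set ps" "merge_column x p = merge_column x q"
    then show "p = q \<or> {p, q} \<in> set (edges_of ps)"
      using free_column_point_edges(2)[OF assms] by (auto simp: merge_column_eq_iff doubleton_eq_iff insert_commute)
  qed
  moreover have "filter (\<lambda>e. e \<notin> link_edges x) (edges_of ps) \<noteq> []"
  proof -
    obtain e where e: "e \<in> set (edges_of ps)"
      using assms(1) grid_path_edges_of unfolding grid_path_def by (metis list.set_intros(1) neq_Nil_conv)
    show ?thesis
    proof (cases "e \<in> link_edges x")
      case True
      then show ?thesis
        using link_edge_partner[OF assms e] left_link_not_link by (metis filter_empty_conv)
    qed (use e in \<open>auto simp: filter_empty_conv\<close>)
  qed
  then have "2 \<le> length (merge_walk x ps)"
    using edges_of_merge_walk[OF adj, of x] by (cases "merge_walk x ps" rule: edges_of.cases) auto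
  ultimately show ?thesis
    by (simp add: grid_walk_def)
qed

lemma horizontal_merge_column: "horizontal (merge_column x ` e) = horizontal e"
  by (simp add: horizontal_def merge_column_def)

lemma link_edge_horizontal_neighbour:
  assumes walk: "grid_walk ps" and free: "x \<notin> blocked_columns ps"
    and split: "edges_of ps = ys @ e # zs" and link: "e \<in> link_edges x"
  shows "(ys \<noteq> [] \<and> horizontal (last ys) = horizontal e) \<or>
    (\<exists>z zs'. zs = z # zs' \<and> z \<notin> link_edges x \<and> horizontal z = horizontal e)"
proof -
  define i where "i = length ys"
  have len: "length ps = length ys + length zs + 2"
    using arg_cong[OF split, of length] by simp
  then have i: "Suc i < length ps"
    unfolding i_def by simp
  have "edges_of ps ! i = e"
    using split unfolding i_def by simp
  then have e: "e = {ps ! i, ps ! Suc i}"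
    using nth_edges_of[OF i] by simp
  obtain y where y: "e = {(x, y), (x + 1, y)}"
    using link by (auto simp: link_edges_def)
  then have "horizontal e"
    by (simp add: horizontal_doubleton)
  from e y consider "ps ! i = (x, y)" "ps ! Suc i = (x + 1, y)" | "ps ! i = (x + 1, y)" "ps ! Suc i = (x, y)"
    by (auto simp: doubleton_eq_iff)
  then show ?thesis
  proof cases
    case 1
    then have pass: "horizontal_pass ps i"
      using free_column_horizontal_pass[OF free, of i] i by simp
    then have "{ps ! (i - 1), ps ! Suc i} = {(x - 1, y), (x + 1, y)}"
      using horizontal_pass_neighbours[OF walk pass] 1 by simp
    then have "0 < i" "ps ! (i - 1) = (x - 1, y)"
      using pass 1 by (auto simp: horizontal_pass_def doubleton_eq_iff)
    moreover have "last ys = edges_of ps ! (i - 1)"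
      using \<open>0 < i\<close> split unfolding i_def by (simp add: last_conv_nth nth_append)
    ultimately show ?thesis
      using nth_edges_of[of "i - 1" ps] i 1 \<open>horizontal e\<close> unfolding i_def
      by (simp add: horizontal_doubleton)
  next
    case 2
    then have pass: "horizontal_pass ps (Suc i)"
      using free_column_horizontal_pass[OF free, of "Suc i"] i by simp
    then have "{ps ! i, ps ! Suc (Suc i)} = {(x - 1, y), (x + 1, y)}"
      using horizontal_pass_neighbours[OF walk pass] 2 by simp
    then have "Suc (Suc i) < length ps" "ps ! Suc (Suc i) = (x - 1, y)"
      using pass 2 by (auto simp: horizontal_pass_def doubleton_eq_iff)
    moreover have "zs = edges_of ps ! Suc i # tl zs"
      using calculation(1) split len unfolding i_def by (cases zs) (auto simp: nth_append)
    ultimately show ?thesis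
      using nth_edges_of[of "Suc i" ps] 2 \<open>horizontal e\<close> left_link_not_link[of x y]
      by (metis horizontal_doubleton insert_commute prod.sel(2))
  qed
qed

lemma bends_merge_walk:
  assumes "grid_walk ps" "x \<notin> blocked_columns ps"
  shows "bends (edges_of (merge_walk x ps)) = bends (edges_of ps)"
proof -
  have adj: "successively grid_adj ps"
    using assms(1) by (simp add: grid_walk_def)
  have "bends (edges_of (merge_walk x ps)) = bends (filter (\<lambda>e. e \<notin> link_edges x) (edges_of ps))"
    unfolding edges_of_merge_walk[OF adj] by (rule bends_map) (simp add: horizontal_merge_column)
  also have "\<dots> = bends (edges_of ps)"
    unfolding bends_conv_remdups_adj
    using link_edge_horizontal_neighbour[OF assms] by (subst remdups_adj_map_filter) auto
  finally show ?thesis .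
qed

section \<open>Transforming representations\<close>

locale edge_image =
  fixes V :: "'a set" and P P' :: "'a \<Rightarrow> gedge list" and \<phi> :: "gedge \<Rightarrow> gedge" and R :: "gedge set"
  assumes set_image: "v \<in> V \<Longrightarrow> set (P' v) = \<phi> ` (set (P v) - R)"
    and inj_image: "inj_on \<phi> (\<Union>v\<in>V. set (P v) - R)"
    and replacement: "v \<in> V \<Longrightarrow> e \<in> set (P v) \<Longrightarrow> e \<in> R \<Longrightarrow>
      \<exists>e'. e' \<notin> R \<and> (\<forall>w\<in>V. e \<in> set (P w) \<longrightarrow> e' \<in> set (P w))"
begin

lemma common_edge_image:
  assumes "S \<subseteq> V" "\<forall>v\<in>S. e \<in> set (P v)"
  shows "\<exists>e'. \<forall>v\<in>S. e' \<in> set (P' v)"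
proof (cases "S = {}")
  case False
  then obtain u where "u \<in> S"
    by blast
  obtain e' where "e' \<notin> R" "\<forall>v\<in>S. e' \<in> set (P v)"
  proof (cases "e \<in> R")
    case True
    then show ?thesis
      using replacement[of u e] that assms \<open>u \<in> S\<close> by blast
  qed (use that assms in blast)
  then have "\<forall>v\<in>S. \<phi> e' \<in> set (P' v)"
    using set_image assms(1) by blast
  then show ?thesis
    by blast
qed simp

lemma meets_iff:
  assumes "u \<in> V" "v \<in> V"
  shows "set (P' u) \<inter> set (P' v) \<noteq> {} \<longleftrightarrow> set (P u) \<inter> set (P v) \<noteq> {}"
proof
  assume "set (P' u) \<inter> set (P' v) \<noteq> {}"
  then obtain e1 e2 where "e1 \<in> set (P u) - R" "e2 \<in> set (P v) - R" "\<phi> e1 = \<phi> e2"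
    using set_image assms by force
  moreover from this have "e1 = e2"
    using inj_image assms by (auto dest: inj_onD)
  ultimately show "set (P u) \<inter> set (P v) \<noteq> {}"
    by blast
next
  assume "set (P u) \<inter> set (P v) \<noteq> {}"
  then obtain e where "\<forall>w\<in>{u, v}. e \<in> set (P w)"
    by blast
  then show "set (P' u) \<inter> set (P' v) \<noteq> {}"
    using common_edge_image[of "{u, v}"] assms by blast
qed

lemma Bk_EPG_rep_image:
  assumes "Bk_EPG_rep k V E P" "\<And>v. v \<in> V \<Longrightarrow> grid_path (P' v) \<and> bends (P' v) \<le> k"
  shows "Bk_EPG_rep k V E P'"
  using assms meets_iff by (simp add: Bk_EPG_rep_def EPG_rep_def)

lemma helly_rep_image:
  assumes "helly_rep V P"
  shows "helly_rep V P'"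
  unfolding helly_rep_def
proof (intro allI impI)
  fix S
  assume "S \<subseteq> V" and "\<forall>u\<in>S. \<forall>v\<in>S. set (P' u) \<inter> set (P' v) \<noteq> {}"
  then have "\<forall>u\<in>S. \<forall>v\<in>S. set (P u) \<inter> set (P v) \<noteq> {}"
    using meets_iff by blast
  then obtain e where "\<forall>v\<in>S. e \<in> set (P v)"
    using assms \<open>S \<subseteq> V\<close> unfolding helly_rep_def by blast
  then show "\<exists>e. \<forall>v\<in>S. e \<in> set (P' v)"
    using common_edge_image \<open>S \<subseteq> V\<close> by blast
qed

end

lemma edge_image_cong: "(\<And>v. v \<in> V \<Longrightarrow> P' v = P v) \<Longrightarrow> edge_image V P P' id {}"
  by unfold_locales auto

definition walk_rep :: "nat \<Rightarrow> 'a set \<Rightarrow> ('a \<Rightarrow> 'a \<Rightarrow> bool) \<Rightarrow> ('a \<Rightarrow> gpoint list) \<Rightarrow> bool" where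
  "walk_rep k V E Q \<longleftrightarrow> (\<forall>v\<in>V. grid_walk (Q v)) \<and> Bk_EPG_rep k V E (\<lambda>v. edges_of (Q v))"

abbreviation helly_walks :: "'a set \<Rightarrow> ('a \<Rightarrow> gpoint list) \<Rightarrow> bool" where
  "helly_walks V Q \<equiv> helly_rep V (\<lambda>v. edges_of (Q v))"

lemma edge_image_merge_walk:
  assumes walks: "\<And>v. v \<in> V \<Longrightarrow> grid_walk (Q v) \<and> x \<notin> blocked_columns (Q v)"
  shows "edge_image V (\<lambda>v. edges_of (Q v)) (\<lambda>v. edges_of (merge_walk x (Q v)))
    (image (merge_column x)) (link_edges x)"
proof
  fix v
  assume "v \<in> V"
  then show "set (edges_of (merge_walk x (Q v))) =
      image (merge_column x) ` (set (edges_of (Q v)) - link_edges x)"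
    using walks edges_of_merge_walk[of "Q v" x] by (auto simp: grid_walk_def)
next
  have safe: "\<exists>a b. e = {a, b} \<and> merge_safe x a b"
    if e: "e \<in> (\<Union>v\<in>V. set (edges_of (Q v)) - link_edges x)" for e
  proof -
    obtain v where "v \<in> V" "e \<in> set (edges_of (Q v))" "e \<notin> link_edges x"
      using e by blast
    then show ?thesis
      using walks free_column_edge_merge_safe by metis
  qed
  show "inj_on (image (merge_column x)) (\<Union>v\<in>V. set (edges_of (Q v)) - link_edges x)"
    using safe merge_column_inj_on_safe_edges by (intro inj_onI) metis
next
  fix v e
  assume "v \<in> V" "e \<in> set (edges_of (Q v))" "e \<in> link_edges x"
  then obtain y where e: "e = {(x, y), (x + 1, y)}"
    using link_edge_partner walks by metis
  have "{(x - 1, y), (x, y)} \<in> set (edges_of (Q w))" if "w \<in> V" "e \<in> set (edges_of (Q w))" for w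
    using free_column_point_edges(1) walks[OF that(1)] edge_subset_walk[OF that(2)] e by blast
  then show "\<exists>e'. e' \<notin> link_edges x \<and> (\<forall>w\<in>V. e \<in> set (edges_of (Q w)) \<longrightarrow> e' \<in> set (edges_of (Q w)))"
    using left_link_not_link by blast
qed

lemma walk_rep_merge_walk:
  assumes rep: "walk_rep k V E Q" and free: "\<And>v. v \<in> V \<Longrightarrow> x \<notin> blocked_columns (Q v)"
  shows "walk_rep k V E (\<lambda>v. merge_walk x (Q v))"
    and "helly_walks V Q \<Longrightarrow> helly_walks V (\<lambda>v. merge_walk x (Q v))"
proof -
  have walks: "grid_walk (Q v) \<and> x \<notin> blocked_columns (Q v)" if "v \<in> V" for v
    using rep free that by (simp add: walk_rep_def)
  interpret edge_image V "\<lambda>v. edges_of (Q v)" "\<lambda>v. edges_of (merge_walk x (Q v))"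
    "image (merge_column x)" "link_edges x"
    using walks by (rule edge_image_merge_walk)
  have "grid_walk (merge_walk x (Q v)) \<and> bends (edges_of (merge_walk x (Q v))) \<le> k" if "v \<in> V" for v
    using walks[OF that] grid_walk_merge_walk bends_merge_walk rep that
    by (simp add: walk_rep_def Bk_EPG_rep_def)
  then show "walk_rep k V E (\<lambda>v. merge_walk x (Q v))"
    using rep Bk_EPG_rep_image grid_path_edges_of by (simp add: walk_rep_def)
  show "helly_walks V Q \<Longrightarrow> helly_walks V (\<lambda>v. merge_walk x (Q v))"
    by (rule helly_rep_image)
qed

lemma horizontal_transpose:
  "grid_adj p q \<Longrightarrow> horizontal (prod.swap ` {p, q}) \<longleftrightarrow> \<not> horizontal {p, q}"
  by (cases p; cases q) (auto simp: horizontal_doubleton grid_adj_def)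

lemma grid_walk_transpose:
  assumes "grid_walk ps"
  shows "grid_walk (map prod.swap ps)" "bends (edges_of (map prod.swap ps)) = bends (edges_of ps)"
proof -
  show "grid_walk (map prod.swap ps)"
    using assms by (auto simp: grid_walk_def distinct_map successively_map grid_adj_def add.commute)
  have "horizontal (prod.swap ` e) \<longleftrightarrow> \<not> horizontal e" if e: "e \<in> set (edges_of ps)" for e
  proof -
    obtain i where "Suc i < length ps" "e = {ps ! i, ps ! Suc i}"
      using e unfolding set_edges_of by blast
    then show ?thesis
      using horizontal_transpose[OF grid_walk_adj[OF assms]] by simp
  qed
  then show "bends (edges_of (map prod.swap ps)) = bends (edges_of ps)"
    unfolding edges_of_map by (intro bends_map) auto
qed

lemma walk_rep_transpose:
  assumes rep: "walk_rep k V E Q"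
  shows "walk_rep k V E (\<lambda>v. map prod.swap (Q v))"
    and "helly_walks V Q \<Longrightarrow> helly_walks V (\<lambda>v. map prod.swap (Q v))"
proof -
  interpret edge_image V "\<lambda>v. edges_of (Q v)" "\<lambda>v. edges_of (map prod.swap (Q v))" "image prod.swap" "{}"
    by unfold_locales (auto simp: edges_of_map intro: inj_on_image)
  have "grid_walk (map prod.swap (Q v)) \<and> bends (edges_of (map prod.swap (Q v))) \<le> k" if "v \<in> V" for v
    using rep grid_walk_transpose that by (simp add: walk_rep_def Bk_EPG_rep_def)
  then show "walk_rep k V E (\<lambda>v. map prod.swap (Q v))"
    using rep Bk_EPG_rep_image grid_path_edges_of by (simp add: walk_rep_def)
  show "helly_walks V Q \<Longrightarrow> helly_walks V (\<lambda>v. map prod.swap (Q v))"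
    by (rule helly_rep_image)
qed

section \<open>Compression\<close>

lemma card_blocked_columns_family:
  assumes "finite V" "walk_rep k V E Q"
  shows "card (\<Union>v\<in>V. blocked_columns (Q v)) \<le> card V * (k + 2)"
proof -
  have "card (\<Union>v\<in>V. blocked_columns (Q v)) \<le> (\<Sum>v\<in>V. card (blocked_columns (Q v)))"
    using card_UN_le[OF assms(1)] .
  also have "\<dots> \<le> (\<Sum>v\<in>V. k + 2)"
    using assms(2) card_blocked_columns by (intro sum_mono) (fastforce simp: walk_rep_def Bk_EPG_rep_def)
  finally show ?thesis
    by simp
qed

lemma exists_free_column:
  assumes "finite V" "walk_rep k V E Q" "a + int (card V * (k + 2)) < b"
  obtains x where "x \<in> {a..b - 1}" "\<And>v. v \<in> V \<Longrightarrow> x \<notin> blocked_columns (Q v)"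
proof -
  define B where "B = (\<Union>v\<in>V. blocked_columns (Q v))"
  have "card B \<le> card V * (k + 2)"
    unfolding B_def by (rule card_blocked_columns_family[OF assms(1,2)])
  then have "int (card B) \<le> int (card V * (k + 2))"
    by (simp only: of_nat_le_iff)
  then have "card B < card {a..b - 1}"
    using assms(3) by simp
  moreover have "finite B"
    unfolding B_def using assms(1) finite_blocked_columns by blast
  ultimately have "\<not> {a..b - 1} \<subseteq> B"
    using card_mono not_le by blast
  then obtain x where "x \<in> {a..b - 1}" "x \<notin> B"
    by blast
  then show ?thesis
    using that unfolding B_def by simp
qed

lemma compress_columns:
  assumes "finite V" "walk_rep k V E Q" "\<And>v. v \<in> V \<Longrightarrow> fst ` set (Q v) \<subseteq> {a..b}"
  shows "\<exists>Q'. walk_rep k V E Q' \<and> (helly_walks V Q \<longrightarrow> helly_walks V Q') \<and>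
    (\<forall>v\<in>V. fst ` set (Q' v) \<subseteq> {a..a + int (card V * (k + 2))} \<and> snd ` set (Q' v) = snd ` set (Q v))"
  using assms(2,3)
proof (induction "nat (b - a)" arbitrary: b Q rule: less_induct)
  case less
  show ?case
  proof (cases "b \<le> a + int (card V * (k + 2))")
    case True
    then show ?thesis
      using less.prems by (intro exI[of _ Q]) fastforce
  next
    case False
    then have "a + int (card V * (k + 2)) < b"
      by simp
    then obtain x where x: "x \<in> {a..b - 1}" and free: "\<And>v. v \<in> V \<Longrightarrow> x \<notin> blocked_columns (Q v)"
      using exists_free_column[OF assms(1) less.prems(1)] by blast
    define Q1 where "Q1 = (\<lambda>v. merge_walk x (Q v))"
    have Q1: "walk_rep k V E Q1" "helly_walks V Q \<Longrightarrow> helly_walks V Q1"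
      unfolding Q1_def using walk_rep_merge_walk[OF less.prems(1) free] by blast+
    have Q1_cols: "fst ` set (Q1 v) \<subseteq> {a..b - 1}" and Q1_rows: "snd ` set (Q1 v) = snd ` set (Q v)"
      if "v \<in> V" for v
      using less.prems(2)[OF that] x by (force simp: Q1_def set_merge_walk merge_column_def)+
    have "nat (b - 1 - a) < nat (b - a)"
      using x by simp
    then obtain Q' where "walk_rep k V E Q'" "helly_walks V Q1 \<longrightarrow> helly_walks V Q'"
      "\<forall>v\<in>V. fst ` set (Q' v) \<subseteq> {a..a + int (card V * (k + 2))} \<and> snd ` set (Q' v) = snd ` set (Q1 v)"
      using less.hyps[OF _ Q1(1) Q1_cols] by blast
    then show ?thesis
      using Q1(2) Q1_rows by (intro exI[of _ Q']) simp
  qed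
qed

lemma compress_rows:
  assumes "finite V" "walk_rep k V E Q" "\<And>v. v \<in> V \<Longrightarrow> snd ` set (Q v) \<subseteq> {c..d}"
  shows "\<exists>Q'. walk_rep k V E Q' \<and> (helly_walks V Q \<longrightarrow> helly_walks V Q') \<and>
    (\<forall>v\<in>V. snd ` set (Q' v) \<subseteq> {c..c + int (card V * (k + 2))} \<and> fst ` set (Q' v) = fst ` set (Q v))"
proof -
  define T where "T = (\<lambda>v. map prod.swap (Q v))"
  have T: "walk_rep k V E T" "helly_walks V Q \<Longrightarrow> helly_walks V T"
    unfolding T_def using walk_rep_transpose[OF assms(2)] by blast+
  have T_cols: "fst ` set (T v) \<subseteq> {c..d}" if "v \<in> V" for v
    using assms(3)[OF that] unfolding T_def by (simp add: image_image)
  obtain T' where T': "walk_rep k V E T'" "helly_walks V T \<longrightarrow> helly_walks V T'"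
    "\<forall>v\<in>V. fst ` set (T' v) \<subseteq> {c..c + int (card V * (k + 2))} \<and> snd ` set (T' v) = snd ` set (T v)"
    using compress_columns[OF assms(1) T(1) T_cols] by blast
  define Q' where "Q' = (\<lambda>v. map prod.swap (T' v))"
  have "walk_rep k V E Q'" "helly_walks V T' \<Longrightarrow> helly_walks V Q'"
    unfolding Q'_def using walk_rep_transpose[OF T'(1)] by blast+
  moreover have "snd ` set (Q' v) \<subseteq> {c..c + int (card V * (k + 2))} \<and> fst ` set (Q' v) = fst ` set (Q v)"
    if "v \<in> V" for v
    using T'(3) that unfolding Q'_def T_def by (simp add: image_image)
  ultimately show ?thesis
    using T(2) T'(2) by blast
qed

lemma finite_int_set_bounded: "finite (S :: int set) \<Longrightarrow> \<exists>a b. S \<subseteq> {a..b}"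
  by (metis Max_ge Min_le atLeastAtMost_iff subsetI)

lemma compress_grid:
  assumes "finite V" "walk_rep k V E Q"
  obtains Q' x0 y0 where "walk_rep k V E Q'" "helly_walks V Q \<Longrightarrow> helly_walks V Q'"
    "\<And>v. v \<in> V \<Longrightarrow> set (Q' v) \<subseteq> {x0..x0 + int (card V * (k + 2))} \<times> {y0..y0 + int (card V * (k + 2))}"
proof -
  define N where "N = int (card V * (k + 2))"
  define X where "X = (\<Union>v\<in>V. set (Q v))"
  have "finite X"
    unfolding X_def using assms(1) by blast
  then obtain a b c d where ab: "fst ` X \<subseteq> {a..b}" and cd: "snd ` X \<subseteq> {c..d}"
    using finite_int_set_bounded[OF finite_imageI] by meson
  have Q_cols: "fst ` set (Q v) \<subseteq> {a..b}" if "v \<in> V" for v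
    using ab that unfolding X_def by blast
  obtain Q1 where Q1: "walk_rep k V E Q1" "helly_walks V Q \<longrightarrow> helly_walks V Q1"
    "\<forall>v\<in>V. fst ` set (Q1 v) \<subseteq> {a..a + N} \<and> snd ` set (Q1 v) = snd ` set (Q v)"
    using compress_columns[OF assms Q_cols] unfolding N_def by blast
  have Q1_rows: "snd ` set (Q1 v) \<subseteq> {c..d}" if "v \<in> V" for v
    using Q1(3) cd that unfolding X_def by blast
  obtain Q2 where Q2: "walk_rep k V E Q2" "helly_walks V Q1 \<longrightarrow> helly_walks V Q2"
    "\<forall>v\<in>V. snd ` set (Q2 v) \<subseteq> {c..c + N} \<and> fst ` set (Q2 v) = fst ` set (Q1 v)"
    using compress_rows[OF assms(1) Q1(1) Q1_rows] unfolding N_def by blast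
  have "set (Q2 v) \<subseteq> {a..a + N} \<times> {c..c + N}" if v: "v \<in> V" for v
  proof
    fix p
    assume p: "p \<in> set (Q2 v)"
    have Q1_v: "fst ` set (Q1 v) \<subseteq> {a..a + N}"
      using Q1(3) v by blast
    have Q2_v: "snd ` set (Q2 v) \<subseteq> {c..c + N}" "fst ` set (Q2 v) = fst ` set (Q1 v)"
      using Q2(3) v by blast+
    have "fst p \<in> {a..a + N}"
      using Q1_v Q2_v(2) imageI[OF p, of fst] by blast
    moreover have "snd p \<in> {c..c + N}"
      using Q2_v(1) imageI[OF p, of snd] by blast
    ultimately show "p \<in> {a..a + N} \<times> {c..c + N}"
      by (simp add: mem_Times_iff)
  qed
  then show ?thesis
    using that Q1(2) Q2(1,2) unfolding N_def by blast
qed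

lemma Bk_EPG_rep_obtain_walk_rep:
  assumes "Bk_EPG_rep k V E P"
  obtains Q where "walk_rep k V E Q" "\<And>v. v \<in> V \<Longrightarrow> edges_of (Q v) = P v"
proof -
  define Q where "Q v = (SOME ps. grid_walk ps \<and> edges_of ps = P v)" for v
  have Q: "grid_walk (Q v) \<and> edges_of (Q v) = P v" if "v \<in> V" for v
  proof -
    have "grid_path (P v)"
      using assms that by (simp add: Bk_EPG_rep_def EPG_rep_def)
    then obtain ps where "grid_walk ps \<and> edges_of ps = P v"
      by (rule grid_path_obtain_walk) simp
    then show ?thesis
      unfolding Q_def by (rule someI)
  qed
  then have "Bk_EPG_rep k V E (\<lambda>v. edges_of (Q v))"
    using assms by (simp add: Bk_EPG_rep_def EPG_rep_def)
  then show ?thesis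
    using Q by (intro that) (auto simp: walk_rep_def)
qed

lemma on_grid_at_most_walks:
  assumes "\<And>v. v \<in> V \<Longrightarrow> set (Q v) \<subseteq> {x0..x0 + int N} \<times> {y0..y0 + int N}"
  shows "on_grid_at_most V (\<lambda>v. edges_of (Q v)) (N + 1)"
proof -
  have "x0 \<le> fst p \<and> fst p < x0 + int (N + 1) \<and> y0 \<le> snd p \<and> snd p < y0 + int (N + 1)"
    if "v \<in> V" "e \<in> set (edges_of (Q v))" "p \<in> e" for v e p
    using assms[OF that(1)] edge_subset_walk[OF that(2)] that(3) by auto
  then have "on_grid V (\<lambda>v. edges_of (Q v)) (N + 1) (N + 1)"
    unfolding on_grid_def by blast
  then show ?thesis
    unfolding on_grid_at_most_def by blast
qed

lemma Bk_EPG_rep_on_small_grid: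
  assumes "finite V" "Bk_EPG_rep k V E P"
  obtains P' where "Bk_EPG_rep k V E P'" "helly_rep V P \<Longrightarrow> helly_rep V P'"
    "on_grid_at_most V P' (card V * (k + 2) + 1)"
proof -
  obtain Q where Q: "walk_rep k V E Q" "\<And>v. v \<in> V \<Longrightarrow> edges_of (Q v) = P v"
    using Bk_EPG_rep_obtain_walk_rep[OF assms(2)] by blast
  obtain Q' x0 y0 where Q': "walk_rep k V E Q'" "helly_walks V Q \<Longrightarrow> helly_walks V Q'"
    "\<And>v. v \<in> V \<Longrightarrow> set (Q' v) \<subseteq> {x0..x0 + int (card V * (k + 2))} \<times> {y0..y0 + int (card V * (k + 2))}"
    using compress_grid[OF assms(1) Q(1)] by blast
  have "edge_image V P (\<lambda>v. edges_of (Q v)) id {}"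
    by (rule edge_image_cong) (rule Q(2))
  then have "helly_rep V P \<Longrightarrow> helly_walks V Q'"
    using edge_image.helly_rep_image Q'(2) by blast
  then show ?thesis
    using that Q'(1) on_grid_at_most_walks[of V Q'] Q'(3) unfolding walk_rep_def by blast
qed

theorem lemma3p4:
  fixes V :: "'a set" and E :: "'a \<Rightarrow> 'a \<Rightarrow> bool" and n k :: nat
  assumes "simple_graph V E" and "card V = n"
  shows "((\<exists>P. Bk_EPG_rep k V E P) \<longrightarrow>
            (\<exists>P. Bk_EPG_rep k V E P \<and> on_grid_at_most V P (4 * n * (k + 1)))) \<and>
         ((\<exists>P. Bk_EPG_rep k V E P \<and> helly_rep V P) \<longrightarrow>
            (\<exists>P. Bk_EPG_rep k V E P \<and> helly_rep V P \<and> on_grid_at_most V P (4 * n * (k + 1))))"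
proof -
  have fin: "finite V"
    using assms(1) by (simp add: simple_graph_def)
  have "\<exists>P'. Bk_EPG_rep k V E P' \<and> (helly_rep V P \<longrightarrow> helly_rep V P') \<and> on_grid_at_most V P' (4 * n * (k + 1))"
    if P: "Bk_EPG_rep k V E P" for P
  proof (cases "V = {}")
    case True
    then show ?thesis
      using P by (auto simp: on_grid_at_most_def on_grid_def)
  next
    case False
    then have "0 < n"
      using fin assms(2) by auto
    then have "n * (k + 2) + 1 \<le> 4 * n * (k + 1)"
      by (simp add: algebra_simps)
    then show ?thesis
      using Bk_EPG_rep_on_small_grid[OF fin P] assms(2) unfolding on_grid_at_most_def
      by (metis le_trans)
  qed
  then show ?thesis
    by blast
qed

end
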